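(* Let $\varepsilon\in\{-1,1\}$, let $M(\phi,\xi,\eta,g_M)$ be a Lorentzian almost (para)contact manifold of dimension $2m+1$, let $(N,g_N)$ be a semi-Riemannian manifold of dimension $n$, and let $F:M\to N$ be an anti-invariant semi-Riemannian submersion such that $\phi(\ker F_* )=(\ker F_* )^\perp$. Then $\xi$ is vertical and $m=n$. Moreover, $N$ is a Riemannian manifold.
   Context: A Lorentzian almost contact ($\varepsilon=-1$), resp. almost paracontact ($\varepsilon=1$), manifold is a $(2m+1)$-dimensional manifold $M$ with Lorentzian metric $g_M$, $(1,1)$-tensor $\phi$, vector field $\xi$ and $1$-form $\eta$ with $\phi^2X=\varepsilon X+\eta(X)\xi$, $g_M(\phi X,\phi Y)=g_M(X,Y)+\eta(X)\eta(Y)$, $\eta(X)=\varepsilon g_M(X,\xi)$, $\eta(\xi)=-\varepsilon$. A semi-Riemannian submersion $F:M\to N$ is a submersion with nondegenerate fibres such that $F_*$ is an isometry from $(\ker F_* )^\perp$ onto $TN$; it is anti-invariant if $\phi(\ker F_* )\subseteq(\ker F_* )^\perp$. $\xi$ vertical means $\xi$ takes values in $\ker F_*$. A Riemannian manifold has positive definite metric. *)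

theory Defs
  imports "HOL-Analysis.Analysis"
begin

text \<open>Pointwise (tangent-space) model. Each tangent space of M is identified with the
finite-dimensional real vector space 'v, each tangent space of N with 'w.\<close>

definition sym_bilinear :: "('a::real_vector \<Rightarrow> 'a \<Rightarrow> real) \<Rightarrow> bool" where
  "sym_bilinear B \<longleftrightarrow> bilinear B \<and> (\<forall>x y. B x y = B y x)"

definition nondegenerate_on :: "('a::real_vector \<Rightarrow> 'a \<Rightarrow> real) \<Rightarrow> 'a set \<Rightarrow> bool" where
  "nondegenerate_on B S \<longleftrightarrow> (\<forall>x\<in>S. (\<forall>y\<in>S. B x y = 0) \<longrightarrow> x = 0)"

definition semi_riem_form :: "('a::real_vector \<Rightarrow> 'a \<Rightarrow> real) \<Rightarrow> bool" where
  "semi_riem_form B \<longleftrightarrow> sym_bilinear B \<and> nondegenerate_on B UNIV"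

definition form_index :: "('a::euclidean_space \<Rightarrow> 'a \<Rightarrow> real) \<Rightarrow> nat" where
  "form_index B = Max {dim S | S. subspace S \<and> (\<forall>x\<in>S. x \<noteq> 0 \<longrightarrow> B x x < 0)}"

definition lorentzian_form :: "('a::euclidean_space \<Rightarrow> 'a \<Rightarrow> real) \<Rightarrow> bool" where
  "lorentzian_form B \<longleftrightarrow> semi_riem_form B \<and> form_index B = 1"

definition riemannian_form :: "('a::real_vector \<Rightarrow> 'a \<Rightarrow> real) \<Rightarrow> bool" where
  "riemannian_form B \<longleftrightarrow> sym_bilinear B \<and> (\<forall>x. x \<noteq> 0 \<longrightarrow> B x x > 0)"

text \<open>Lorentzian almost contact (\<epsilon> = -1) / almost paracontact (\<epsilon> = 1) structure on one
tangent space.\<close>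
definition lorentzian_apc_structure ::
  "real \<Rightarrow> ('a::euclidean_space \<Rightarrow> 'a \<Rightarrow> real) \<Rightarrow> ('a \<Rightarrow> 'a) \<Rightarrow> 'a \<Rightarrow> ('a \<Rightarrow> real) \<Rightarrow> bool" where
  "lorentzian_apc_structure \<epsilon> g \<phi> \<xi> \<eta> \<longleftrightarrow>
     lorentzian_form g \<and> linear \<phi> \<and> linear \<eta> \<and>
     (\<forall>X. \<phi> (\<phi> X) = \<epsilon> *\<^sub>R X + \<eta> X *\<^sub>R \<xi>) \<and>
     (\<forall>X Y. g (\<phi> X) (\<phi> Y) = g X Y + \<eta> X * \<eta> Y) \<and>
     (\<forall>X. \<eta> X = \<epsilon> * g X \<xi>) \<and>
     \<eta> \<xi> = - \<epsilon>"

definition vert_space :: "('a::real_vector \<Rightarrow> 'b::real_vector) \<Rightarrow> 'a set" where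
  "vert_space dF = {v. dF v = 0}"

definition horiz_space :: "('a::real_vector \<Rightarrow> 'a \<Rightarrow> real) \<Rightarrow> ('a \<Rightarrow> 'b::real_vector) \<Rightarrow> 'a set" where
  "horiz_space g dF = {x. \<forall>y\<in>vert_space dF. g x y = 0}"

definition semi_riem_submersion_at ::
  "('a::real_vector \<Rightarrow> 'a \<Rightarrow> real) \<Rightarrow> ('b::real_vector \<Rightarrow> 'b \<Rightarrow> real) \<Rightarrow> ('a \<Rightarrow> 'b) \<Rightarrow> bool" where
  "semi_riem_submersion_at g h dF \<longleftrightarrow>
     linear dF \<and> surj dF \<and>
     nondegenerate_on g (vert_space dF) \<and>
     bij_betw dF (horiz_space g dF) UNIV \<and>
     (\<forall>x\<in>horiz_space g dF. \<forall>y\<in>horiz_space g dF. h (dF x) (dF y) = g x y)"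

end

theory Submission
  imports Defs
begin

text \<open>At a point, \<phi> kills exactly the line of \<xi> and maps every vector into the g-orthogonal
  complement of \<xi>. Since \<phi> maps the vertical space onto the horizontal one, \<xi> is orthogonal to
  the horizontal space, hence vertical, and rank-nullity for \<phi> on the vertical space gives
  dim V = dim H + 1; with dim V + dim H = 2m + 1 and dim H = n this yields m = n. Finally, the metric
  has index 1 and \<xi> is timelike, so g is positive semidefinite on the horizontal space; an
  isotropic horizontal vector would be orthogonal to everything, so g is positive definite there,
  and the isometry dF carries this over to N.\<close>

lemma dim_image_add_dim_kernel:
  fixes f :: "'a::euclidean_space \<Rightarrow> 'b::real_vector"
  assumes f: "linear f" and V: "subspace V"
  shows "dim (f ` V) + dim {x \<in> V. f x = 0} = dim V"
proof -
  define K where "K = {x \<in> V. f x = 0}"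
  define W where "W = {y \<in> V. \<forall>x\<in>K. orthogonal x y}"
  have K: "subspace K" "K \<subseteq> V"
    using V f unfolding K_def subspace_def by (auto simp: linear_0 linear_add linear_scale)
  have W: "subspace W"
    using V unfolding W_def subspace_def by (auto intro: orthogonal_clauses)
  have "f ` W = f ` V"
  proof
    show "f ` V \<subseteq> f ` W"
    proof
      fix u assume "u \<in> f ` V"
      then obtain v where v: "v \<in> V" "u = f v" by blast
      obtain a w where a: "a \<in> span K" and w: "\<And>x. x \<in> span K \<Longrightarrow> orthogonal w x"
        and vaw: "v = a + w"
        using orthogonal_subspace_decomp_exists by metis
      have aK: "a \<in> K" using a K(1) by (simp add: span_eq_iff[THEN iffD2])
      then have "w \<in> W"
        using v vaw K V w unfolding W_def
        by (auto simp: orthogonal_commute span_base dest: subspace_diff[of V v a])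
      moreover have "f v = f w" using aK vaw f unfolding K_def by (simp add: linear_add)
      ultimately show "u \<in> f ` W" using v by blast
    qed
  qed (auto simp: W_def)
  moreover have "inj_on f (span W)"
  proof -
    have "w = 0" if "w \<in> W" "f w = 0" for w
      using that unfolding W_def K_def by (auto simp: orthogonal_self)
    then show ?thesis using W f by (simp add: linear_inj_on_iff_eq_0 span_eq_iff[THEN iffD2, OF W])
  qed
  then have "dim (f ` W) = dim W" using dim_image_eq[OF f] by blast
  moreover have "dim W + dim K = dim V"
    using dim_subspace_orthogonal_to_vectors[OF K(1) V K(2)] unfolding W_def .
  ultimately show ?thesis unfolding K_def by simp
qed

lemma sym_bilinear_square:
  assumes "sym_bilinear B"
  shows "B (a *\<^sub>R x + b *\<^sub>R y) (a *\<^sub>R x + b *\<^sub>R y) = a\<^sup>2 * B x x + 2 * a * b * B x y + b\<^sup>2 * B y y"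
  using assms unfolding sym_bilinear_def
  by (auto simp: bilinear_ladd bilinear_radd bilinear_lmul bilinear_rmul power2_eq_square algebra_simps)

lemma quadratic_nonneg_imp_linear_coeff_zero:
  fixes c d :: real
  assumes "\<And>t. 0 \<le> t * c + t\<^sup>2 * d"
  shows "c = 0"
proof (rule ccontr)
  assume "c \<noteq> 0"
  define k where "k = 1 / (\<bar>d\<bar> + 1)"
  have "k > 0" "k * d < 1"
    unfolding k_def by (auto simp: field_simps abs_if)
  have "(- c * k) * c + (- c * k)\<^sup>2 * d = c\<^sup>2 * k * (k * d - 1)"
    by (simp add: power2_eq_square algebra_simps)
  also have "\<dots> < 0"
    using \<open>c \<noteq> 0\<close> \<open>k > 0\<close> \<open>k * d < 1\<close> by (simp add: mult_pos_neg)
  finally show False using assms[of "- c * k"] by simp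
qed

lemma semidefinite_isotropic_orthogonal:
  assumes B: "sym_bilinear B" and S: "subspace S" and semidef: "\<And>z. z \<in> S \<Longrightarrow> 0 \<le> B z z"
    and x: "x \<in> S" "B x x = 0" and y: "y \<in> S"
  shows "B x y = 0"
proof -
  have "0 \<le> t * (2 * B x y) + t\<^sup>2 * B y y" for t
    using semidef[of "1 *\<^sub>R x + t *\<^sub>R y"] sym_bilinear_square[OF B, of 1 x t y] x y S
    by (simp add: subspace_add subspace_mul algebra_simps)
  then show ?thesis using quadratic_nonneg_imp_linear_coeff_zero by fastforce
qed

lemma dim_le_form_index:
  fixes B :: "'a::euclidean_space \<Rightarrow> 'a \<Rightarrow> real"
  assumes "subspace S" "\<And>x. x \<in> S \<Longrightarrow> x \<noteq> 0 \<Longrightarrow> B x x < 0"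
  shows "dim S \<le> form_index B"
proof -
  let ?D = "{dim S | S. subspace S \<and> (\<forall>x\<in>S. x \<noteq> 0 \<longrightarrow> B x x < 0)}"
  have "?D \<subseteq> {..DIM('a)}" using dim_subset_UNIV by fastforce
  then have "finite ?D" by (rule finite_subset) simp
  moreover have "dim S \<in> ?D" using assms by blast
  ultimately show ?thesis unfolding form_index_def by simp
qed

locale lorentzian_apc =
  fixes \<epsilon> :: real and g :: "'v::euclidean_space \<Rightarrow> 'v \<Rightarrow> real"
    and \<phi> :: "'v \<Rightarrow> 'v" and \<xi> :: 'v and \<eta> :: "'v \<Rightarrow> real"
  assumes eps_nonzero: "\<epsilon> \<noteq> 0"
    and apc_structure: "lorentzian_apc_structure \<epsilon> g \<phi> \<xi> \<eta>"
begin

lemma linear_phi: "linear \<phi>"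
  and phi_phi: "\<phi> (\<phi> X) = \<epsilon> *\<^sub>R X + \<eta> X *\<^sub>R \<xi>"
  and eta_eq: "\<eta> X = \<epsilon> * g X \<xi>"
  and eta_xi: "\<eta> \<xi> = - \<epsilon>"
  and semi_riem_form_g: "semi_riem_form g"
  and form_index_g: "form_index g = 1"
  using apc_structure unfolding lorentzian_apc_structure_def lorentzian_form_def by auto

lemma sym_bilinear_g: "sym_bilinear g"
  using semi_riem_form_g unfolding semi_riem_form_def by simp

lemma g_xi_xi: "g \<xi> \<xi> = -1"
proof -
  have "\<epsilon> * g \<xi> \<xi> = \<epsilon> * -1" using eta_eq[of \<xi>] eta_xi by simp
  then show ?thesis using eps_nonzero by (metis mult_left_cancel)
qed

lemma xi_nonzero: "\<xi> \<noteq> 0"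
  using g_xi_xi sym_bilinear_g unfolding sym_bilinear_def by (auto simp: bilinear_lzero)

lemma phi_eq_0_imp_in_span_xi:
  assumes "\<phi> x = 0"
  shows "x \<in> span {\<xi>}"
proof -
  have "\<epsilon> *\<^sub>R x + \<eta> x *\<^sub>R \<xi> = 0"
    using phi_phi[of x] assms linear_phi by (simp add: linear_0)
  then have "\<epsilon> *\<^sub>R x = (- \<eta> x) *\<^sub>R \<xi>" by (simp add: add_eq_0_iff)
  then have "x = (- \<eta> x / \<epsilon>) *\<^sub>R \<xi>"
    using eps_nonzero by (metis scaleR_scaleR scaleR_one divide_inverse_commute left_inverse)
  then show ?thesis by (metis span_base span_mul singletonI)
qed

lemma phi_xi: "\<phi> \<xi> = 0"
proof -
  have "\<phi> (\<phi> \<xi>) = 0" using phi_phi[of \<xi>] eta_xi by simp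
  then obtain c where c: "\<phi> \<xi> = c *\<^sub>R \<xi>"
    using phi_eq_0_imp_in_span_xi by (auto simp: span_singleton)
  then have "c *\<^sub>R c *\<^sub>R \<xi> = 0" using \<open>\<phi> (\<phi> \<xi>) = 0\<close> linear_phi by (simp add: linear_scale)
  then show ?thesis using c xi_nonzero by simp
qed

lemma g_phi_xi: "g (\<phi> X) \<xi> = 0"
proof -
  have "\<phi> (\<phi> (\<phi> X)) = \<epsilon> *\<^sub>R \<phi> X"
    using phi_phi[of X] linear_phi phi_xi by (simp add: linear_add linear_scale)
  then have "\<eta> (\<phi> X) *\<^sub>R \<xi> = 0" using phi_phi[of "\<phi> X"] by simp
  then show ?thesis using eta_eq[of "\<phi> X"] xi_nonzero eps_nonzero by simp
qed

text \<open>Since the index of g is 1 and \<xi> is timelike, the orthogonal complement of \<xi> contains no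
  timelike vector: otherwise \<xi> and that vector would span a negative definite plane.\<close>
lemma g_nonneg_if_orthogonal_xi:
  assumes y: "g y \<xi> = 0"
  shows "0 \<le> g y y"
proof (rule ccontr)
  assume "\<not> 0 \<le> g y y"
  then have neg: "g y y < 0" by simp
  have sym: "g \<xi> y = 0" using y sym_bilinear_g unfolding sym_bilinear_def by simp
  have "x = 0" if "x = a *\<^sub>R \<xi> + b *\<^sub>R y" "0 \<le> g x x" for x a b
  proof -
    have "g x x = - a\<^sup>2 + b\<^sup>2 * g y y"
      using that sym_bilinear_square[OF sym_bilinear_g] g_xi_xi sym by simp
    then have "a\<^sup>2 \<le> 0" "0 \<le> b\<^sup>2 * g y y"
      using that(2) neg mult_nonneg_nonpos[of "b\<^sup>2" "g y y"] zero_le_power2[of a] zero_le_power2[of b]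
      by linarith+
    then have "a = 0" "b = 0" using neg by (auto simp: zero_le_mult_iff)
    then show ?thesis using that(1) by simp
  qed
  moreover have "\<exists>a b. x = a *\<^sub>R \<xi> + b *\<^sub>R y" if x: "x \<in> span {\<xi>, y}" for x
  proof -
    obtain a where "x - a *\<^sub>R \<xi> \<in> span {y}"
      using x unfolding span_insert[of \<xi> "{y}"] by blast
    then obtain b where "x - a *\<^sub>R \<xi> = b *\<^sub>R y" unfolding span_singleton by blast
    then have "x = a *\<^sub>R \<xi> + b *\<^sub>R y" by (simp add: diff_eq_eq add.commute)
    then show ?thesis by blast
  qed
  ultimately have negdef: "\<And>x. x \<in> span {\<xi>, y} \<Longrightarrow> x \<noteq> 0 \<Longrightarrow> g x x < 0"
    by (meson not_le)
  have "\<xi> \<notin> span {y}"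
  proof
    assume "\<xi> \<in> span {y}"
    then obtain c where "\<xi> = c *\<^sub>R y" by (auto simp: span_singleton)
    then show False
      using sym g_xi_xi sym_bilinear_g unfolding sym_bilinear_def by (auto simp: bilinear_rmul)
  qed
  moreover have "y \<noteq> 0" using neg sym_bilinear_g unfolding sym_bilinear_def by (auto simp: bilinear_lzero)
  ultimately have "dim (span {\<xi>, y}) = 2" by (simp add: dim_insert)
  then show False
    using dim_le_form_index[of "span {\<xi>, y}" g] negdef form_index_g by simp
qed

end

locale semi_riem_submersion =
  fixes g :: "'v::euclidean_space \<Rightarrow> 'v \<Rightarrow> real" and h :: "'w::euclidean_space \<Rightarrow> 'w \<Rightarrow> real"
    and dF :: "'v \<Rightarrow> 'w"
  assumes metric: "semi_riem_form g"
    and submersion: "semi_riem_submersion_at g h dF"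
begin

lemma linear_dF: "linear dF"
  and nondegenerate_vert: "nondegenerate_on g (vert_space dF)"
  and bij_horiz: "bij_betw dF (horiz_space g dF) UNIV"
  and isometry_horiz: "x \<in> horiz_space g dF \<Longrightarrow> y \<in> horiz_space g dF \<Longrightarrow> h (dF x) (dF y) = g x y"
  using submersion unfolding semi_riem_submersion_at_def by auto

lemma bilinear_g: "bilinear g"
  using metric unfolding semi_riem_form_def sym_bilinear_def by simp

lemma subspace_vert: "subspace (vert_space dF)"
  unfolding vert_space_def using linear_dF by (simp add: linear_subspace_kernel)

lemma subspace_horiz: "subspace (horiz_space g dF)"
  unfolding horiz_space_def subspace_def
  using bilinear_g by (auto simp: bilinear_lzero bilinear_ladd bilinear_lmul)

lemma horiz_orthogonal_vert: "k \<in> horiz_space g dF \<Longrightarrow> v \<in> vert_space dF \<Longrightarrow> g k v = 0"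
  unfolding horiz_space_def by simp

lemma vert_plus_horiz: obtains v k where "v \<in> vert_space dF" "k \<in> horiz_space g dF" "x = v + k"
proof -
  obtain k where k: "k \<in> horiz_space g dF" "dF k = dF x"
    using bij_horiz unfolding bij_betw_def by (metis UNIV_I imageE)
  then have "x - k \<in> vert_space dF"
    unfolding vert_space_def using linear_dF by (simp add: linear_diff)
  with k that show ?thesis by (metis diff_add_cancel)
qed

lemma vert_Int_horiz: "vert_space dF \<inter> horiz_space g dF = {0}"
  using nondegenerate_vert subspace_vert subspace_horiz bilinear_g
  unfolding nondegenerate_on_def horiz_space_def by (auto simp: subspace_0 bilinear_lzero)

lemma dim_vert_add_dim_horiz: "dim (vert_space dF) + dim (horiz_space g dF) = DIM('v)"
proof -
  have "x \<in> {v + k |v k. v \<in> vert_space dF \<and> k \<in> horiz_space g dF}" for x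
    by (rule vert_plus_horiz[of x]) blast
  then have "{v + k |v k. v \<in> vert_space dF \<and> k \<in> horiz_space g dF} = UNIV" by blast
  then show ?thesis
    using dim_sums_Int[OF subspace_vert subspace_horiz] vert_Int_horiz by (simp add: dim_insert)
qed

lemma dim_horiz: "dim (horiz_space g dF) = DIM('w)"
proof -
  have "inj_on dF (span (horiz_space g dF))"
    using bij_horiz unfolding bij_betw_def span_eq_iff[THEN iffD2, OF subspace_horiz] by simp
  then have "dim (dF ` horiz_space g dF) = dim (horiz_space g dF)"
    using dim_image_eq[OF linear_dF] by blast
  then show ?thesis using bij_horiz unfolding bij_betw_def by simp
qed

lemma orthogonal_vert_horiz_imp_zero:
  assumes "\<And>v. v \<in> vert_space dF \<Longrightarrow> g k v = 0" "\<And>y. y \<in> horiz_space g dF \<Longrightarrow> g k y = 0"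
  shows "k = 0"
proof -
  have "g k z = 0" for z
    by (rule vert_plus_horiz[of z]) (use assms bilinear_g in \<open>simp add: bilinear_radd\<close>)
  then show ?thesis using metric unfolding semi_riem_form_def nondegenerate_on_def by blast
qed

lemma positive_target_if_positive_horiz:
  assumes pos: "\<And>x. x \<in> horiz_space g dF \<Longrightarrow> x \<noteq> 0 \<Longrightarrow> 0 < g x x" and "w \<noteq> 0"
  shows "0 < h w w"
proof -
  obtain x where x: "x \<in> horiz_space g dF" "dF x = w"
    using bij_horiz unfolding bij_betw_def by (metis UNIV_I imageE)
  then have "x \<noteq> 0" using \<open>w \<noteq> 0\<close> linear_dF linear_0 by metis
  then show ?thesis using pos x isometry_horiz by force
qed

end

locale anti_invariant_submersion = lorentzian_apc \<epsilon> g \<phi> \<xi> \<eta>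
  for \<epsilon> g and \<phi> :: "'v::euclidean_space \<Rightarrow> 'v" and \<xi> \<eta> +
  fixes h :: "'w::euclidean_space \<Rightarrow> 'w \<Rightarrow> real" and dF :: "'v \<Rightarrow> 'w"
  assumes submersion: "semi_riem_submersion_at g h dF"
    and phi_vert_eq_horiz: "\<phi> ` vert_space dF = horiz_space g dF"
begin

sublocale semi_riem_submersion g h dF
  using semi_riem_form_g submersion by unfold_locales

lemma xi_vertical: "\<xi> \<in> vert_space dF"
proof -
  obtain v k where vk: "v \<in> vert_space dF" "k \<in> horiz_space g dF" "\<xi> = v + k"
    by (rule vert_plus_horiz)
  have "g k y = 0" if y: "y \<in> horiz_space g dF" for y
  proof -
    obtain u where "y = \<phi> u" using y phi_vert_eq_horiz by auto
    then have "g \<xi> y = 0" using g_phi_xi sym_bilinear_g unfolding sym_bilinear_def by metis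
    moreover have "g v y = 0"
      using horiz_orthogonal_vert[OF y vk(1)] sym_bilinear_g unfolding sym_bilinear_def by metis
    ultimately show ?thesis using vk(3) bilinear_g by (simp add: bilinear_ladd)
  qed
  then have "k = 0" using orthogonal_vert_horiz_imp_zero horiz_orthogonal_vert vk(2) by blast
  then show ?thesis using vk by simp
qed

lemma dim_vert: "dim (vert_space dF) = dim (horiz_space g dF) + 1"
proof -
  have "{x \<in> vert_space dF. \<phi> x = 0} = span {\<xi>}"
    using phi_eq_0_imp_in_span_xi xi_vertical phi_xi subspace_vert
    by (auto simp: span_singleton subspace_mul linear_scale[OF linear_phi])
  then show ?thesis
    using dim_image_add_dim_kernel[OF linear_phi subspace_vert] phi_vert_eq_horiz xi_nonzero
    by (simp add: dim_insert)
qed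

lemma DIM_eq_twice_DIM_plus_one: "DIM('v) = 2 * DIM('w) + 1"
  using dim_vert_add_dim_horiz dim_vert dim_horiz by simp

lemma positive_horiz:
  assumes x: "x \<in> horiz_space g dF" "x \<noteq> 0"
  shows "0 < g x x"
proof -
  have semidef: "0 \<le> g z z" if "z \<in> horiz_space g dF" for z
    using g_nonneg_if_orthogonal_xi horiz_orthogonal_vert[OF that xi_vertical] .
  have "g x x \<noteq> 0"
  proof
    assume "g x x = 0"
    then have "g x y = 0" if "y \<in> horiz_space g dF" for y
      using semidefinite_isotropic_orthogonal[OF sym_bilinear_g subspace_horiz semidef x(1)] that
      by blast
    then show False using orthogonal_vert_horiz_imp_zero horiz_orthogonal_vert x by blast
  qed
  then show ?thesis using semidef[OF x(1)] by simp
qed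

lemma positive_target: "w \<noteq> 0 \<Longrightarrow> 0 < h w w"
  using positive_target_if_positive_horiz positive_horiz by blast

end

theorem mainTheorem13:
  fixes \<epsilon> :: real and m n :: nat
    and M :: "'p set" and N :: "'q set" and F :: "'p \<Rightarrow> 'q"
    and dF :: "'p \<Rightarrow> 'v::euclidean_space \<Rightarrow> 'w::euclidean_space"
    and gM :: "'p \<Rightarrow> 'v \<Rightarrow> 'v \<Rightarrow> real" and gN :: "'q \<Rightarrow> 'w \<Rightarrow> 'w \<Rightarrow> real"
    and \<phi> :: "'p \<Rightarrow> 'v \<Rightarrow> 'v" and \<xi> :: "'p \<Rightarrow> 'v" and \<eta> :: "'p \<Rightarrow> 'v \<Rightarrow> real"
  assumes eps: "\<epsilon> \<in> {-1, 1}"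
    and dimM: "DIM('v) = 2 * m + 1"
    and dimN: "DIM('w) = n"
    and M_ne: "M \<noteq> {}"
    and structM: "\<forall>p\<in>M. lorentzian_apc_structure \<epsilon> (gM p) (\<phi> p) (\<xi> p) (\<eta> p)"
    and metricN: "\<forall>q\<in>N. semi_riem_form (gN q)"
    and F_onto: "F ` M = N"
    and subm: "\<forall>p\<in>M. semi_riem_submersion_at (gM p) (gN (F p)) (dF p)"
    and anti_inv: "\<forall>p\<in>M. \<phi> p ` vert_space (dF p) \<subseteq> horiz_space (gM p) (dF p)"
    and phi_eq: "\<forall>p\<in>M. \<phi> p ` vert_space (dF p) = horiz_space (gM p) (dF p)"
  shows "(\<forall>p\<in>M. \<xi> p \<in> vert_space (dF p)) \<and> m = n \<and> (\<forall>q\<in>N. riemannian_form (gN q))"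
proof -
  have point: "anti_invariant_submersion \<epsilon> (gM p) (\<phi> p) (\<xi> p) (\<eta> p) (gN (F p)) (dF p)"
    if "p \<in> M" for p
    using eps structM subm phi_eq that by unfold_locales auto
  obtain p0 where "p0 \<in> M" using M_ne by blast
  then have "m = n" using anti_invariant_submersion.DIM_eq_twice_DIM_plus_one[OF point] dimM dimN by simp
  moreover have "riemannian_form (gN q)" if q: "q \<in> N" for q
  proof -
    obtain p where "p \<in> M" "q = F p" using F_onto q by blast
    then show ?thesis
      using anti_invariant_submersion.positive_target[OF point] metricN q
      unfolding riemannian_form_def semi_riem_form_def by blast
  qed
  ultimately show ?thesis using anti_invariant_submersion.xi_vertical[OF point] by blast
qed

end
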